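(* Let $a>1$, $d\ge 4$, and let $G$ be generated by the security model $\mathcal{S}(n,a,d)$; let $T_1=\log^{a+1}n$. Then with probability $1-o(1)$: (1) every community (homochromatic set) of $G$ has size $O(\log^{a+1} n)$; and (2) for every $t\ge T_1$, every community at the end of time step $t$ has size $O(\log^{a+1} t)$.
   Context: Security model $\mathcal{S}(n,a,d)$ (homophyly exponent $a$, natural number $d$): start with an initial graph $G_2$ on two nodes, each of which is a seed node with its own distinct color. For $i=3,\dots,n$, given $G_{i-1}$, let $p_i=(\log i)^{-a}$ and create a new node $v$. With probability $p_i$, $v$ receives a brand-new color $c$ and is called the seed node of $c$; then one edge $(v,u)$ is added with $u$ chosen with probability proportional to degrees in $G_{i-1}$, and $d-1$ edges $(v,u_j)$ are added, each $u_j$ chosen uniformly at random among all seed nodes of $G_{i-1}$. Otherwise, $v$ picks a color $c$ uniformly at random among all colors present in $G_{i-1}$, takes color $c$, and $d$ edges $(v,u_j)$ are added, each $u_j$ chosen with probability proportional to degree among the nodes of color $c$ in $G_{i-1}$. The network is $G=G_n$. A homochromatic set is the set of all nodes of one color; here its size is the size of that set (at the end of the construction, or at the end of step $t$). *)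

theory Defs
  imports "HOL-Probability.Probability"
begin

text \<open>State of the security model after some step:
  (colour list, seed-node set, edge multiset). Nodes are 0,...,length col - 1;
  node v has colour col ! v. Edges form a multigraph (multiset of pairs).\<close>

type_synonym sm_state = "nat list \<times> nat set \<times> (nat \<times> nat) multiset"

definition deg_ms :: "(nat \<times> nat) multiset \<Rightarrow> nat multiset" where
  "deg_ms E = image_mset fst E + image_mset snd E"

primrec iid_list :: "nat \<Rightarrow> 'a pmf \<Rightarrow> 'a list pmf" where
  "iid_list 0 p = return_pmf []"
| "iid_list (Suc k) p = do { x \<leftarrow> p; xs \<leftarrow> iid_list k p; return_pmf (x # xs) }"

text \<open>Step i: given G_{i-1}, create node v = i - 1 (0-based).\<close>
definition sm_step :: "real \<Rightarrow> nat \<Rightarrow> nat \<Rightarrow> sm_state \<Rightarrow> sm_state pmf" where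
  "sm_step a d i s = (case s of (col, S, E) \<Rightarrow>
     (let v = length col in
      do { b \<leftarrow> bernoulli_pmf ((ln (real i)) powr (- a));
           if b then do {
             u \<leftarrow> pmf_of_multiset (deg_ms E);
             us \<leftarrow> iid_list (d - 1) (pmf_of_set S);
             return_pmf (col @ [card (set col)], insert v S,
                         E + {#(v, u)#} + mset (map (\<lambda>w. (v, w)) us)) }
           else do {
             c \<leftarrow> pmf_of_set (set col);
             us \<leftarrow> iid_list d (pmf_of_multiset (filter_mset (\<lambda>w. col ! w = c) (deg_ms E)));
             return_pmf (col @ [c], S, E + mset (map (\<lambda>w. (v, w)) us)) } }))"

definition sm_init :: sm_state where
  "sm_init = ([0, 1], {0, 1}, {#(0, 1)#})"

text \<open>sm_graph a d n is the distribution of G_n (for n \<ge> 2).\<close>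
primrec sm_graph :: "real \<Rightarrow> nat \<Rightarrow> nat \<Rightarrow> sm_state pmf" where
  "sm_graph a d 0 = return_pmf sm_init"
| "sm_graph a d (Suc t) =
     (if Suc t \<le> 2 then return_pmf sm_init else sm_graph a d t \<bind> sm_step a d (Suc t))"

text \<open>Size of the homochromatic set of colour c among the first t nodes
  (i.e. at the end of step t, since nodes never change colour).\<close>
definition comm_size_at :: "nat list \<Rightarrow> nat \<Rightarrow> nat \<Rightarrow> nat" where
  "comm_size_at col t c = length (filter (\<lambda>x. x = c) (take t col))"

end

theory Submission
  imports Defs "HOL-Real_Asymp.Real_Asymp"
begin

text \<open>Only the colour list matters, and it is a Markov chain of its own: at step \<open>i\<close> a new colour
  appears with probability \<open>p\<^sub>i = ln\<^sup>-\<^sup>a i\<close>, otherwise a uniformly random present colour is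
  repeated. Fix a time \<open>t\<close> and put \<open>L = ln t\<close>, \<open>A = L\<^sup>a\<close>. A Chernoff bound on the number of
  seeds shows that, except with probability \<open>t\<^sup>-\<^sup>3\<close>, every time \<open>r \<ge> s\<^sub>0 \<approx> 16 L A\<close> up to \<open>t\<close>
  has at least \<open>m\<^sub>r = (r - 2) / (4 A)\<close> colours. On this event the potential \<open>\<Sum>\<^sub>c q\<^bsup>|c|\<^esup>\<close>
  with \<open>q = 1 + 1/A\<close> grows in expectation by a factor at most \<open>1 + (q - 1)/m\<^sub>r = 1 + 4/(r - 2)\<close>
  per step, so its expectation at time \<open>t\<close> is \<open>O(t\<^sup>1\<^sup>3)\<close>, whereas a class of size \<open>40 L A\<close> forces
  it above \<open>q\<^bsup>40 L A\<^esup> \<ge> t\<^sup>2\<^sup>0\<close>. Hence a class larger than \<open>40 ln\<^bsup>a+1\<^esup> t\<close> exists at time \<open>t\<close>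
  with probability \<open>O(t\<^sup>-\<^sup>3)\<close>, and a union bound over \<open>ln\<^bsup>a+1\<^esup> n \<le> t \<le> n\<close> finishes the proof.\<close>

section \<open>The colour process\<close>

definition seed_prob :: "real \<Rightarrow> nat \<Rightarrow> real" where
  "seed_prob a i = ln (real i) powr (- a)"

definition colour_step :: "real \<Rightarrow> nat \<Rightarrow> nat list \<Rightarrow> nat list pmf" where
  "colour_step a i col = bernoulli_pmf (seed_prob a i) \<bind> (\<lambda>b.
     if b then return_pmf (col @ [card (set col)])
     else map_pmf (\<lambda>c. col @ [c]) (pmf_of_set (set col)))"

primrec colour_process :: "real \<Rightarrow> nat \<Rightarrow> nat list pmf" where
  "colour_process a 0 = return_pmf [0, 1]"
| "colour_process a (Suc t) =
     (if Suc t \<le> 2 then return_pmf [0, 1] else colour_process a t \<bind> colour_step a (Suc t))"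

lemma map_pmf_fst_sm_step: "map_pmf fst (sm_step a d i s) = colour_step a i (fst s)"
  unfolding sm_step_def colour_step_def seed_prob_def
  by (cases s) (auto simp: map_bind_pmf Let_def pmf.map_comp o_def map_pmf_const intro!: bind_pmf_cong,
      simp add: map_pmf_def)

lemma map_pmf_fst_sm_graph: "map_pmf fst (sm_graph a d n) = colour_process a n"
proof (induction n)
  case (Suc n)
  then show ?case
    by (simp add: sm_init_def map_bind_pmf map_pmf_fst_sm_step bind_map_pmf[symmetric])
qed (simp add: sm_init_def)

definition colours_initial_segment :: "nat list \<Rightarrow> bool" where
  "colours_initial_segment col \<longleftrightarrow> (\<exists>k\<ge>2. set col = {0..<k})"

lemma colours_initial_segmentD:
  assumes "colours_initial_segment col"
  shows "set col = {0..<card (set col)}" "card (set col) \<ge> 2"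
proof -
  obtain k where "k \<ge> 2" "set col = {0..<k}"
    using assms unfolding colours_initial_segment_def by blast
  then show "set col = {0..<card (set col)}" "card (set col) \<ge> 2" by simp_all
qed

lemma colours_initial_segment_fresh:
  assumes "colours_initial_segment col"
  shows "col \<noteq> []" "card (set col) \<notin> set col"
proof -
  note K = colours_initial_segmentD[OF assms]
  show "col \<noteq> []" using K(2) by auto
  show "card (set col) \<notin> set col" by (subst K(1)) simp
qed

lemma set_pmf_colour_step:
  assumes "col \<noteq> []"
  shows "set_pmf (colour_step a i col) \<subseteq> insert (col @ [card (set col)]) ((\<lambda>c. col @ [c]) ` set col)"
proof -
  have "set_pmf (if b then return_pmf (col @ [card (set col)])
                 else map_pmf (\<lambda>c. col @ [c]) (pmf_of_set (set col)))
     \<subseteq> insert (col @ [card (set col)]) ((\<lambda>c. col @ [c]) ` set col)" for b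
    using assms by (cases b) (auto simp: set_pmf_of_set)
  then show ?thesis unfolding colour_step_def set_bind_pmf by blast
qed

lemma finite_set_pmf_colour_step: "col \<noteq> [] \<Longrightarrow> finite (set_pmf (colour_step a i col))"
  by (rule finite_subset[OF set_pmf_colour_step]) auto

lemma colour_process_support:
  assumes "col \<in> set_pmf (colour_process a n)"
  shows "length col = max n 2" "colours_initial_segment col"
proof -
  have "length col = max n 2 \<and> colours_initial_segment col"
    using assms
  proof (induction n arbitrary: col)
    case 0
    then show ?case by (auto simp: colours_initial_segment_def)
  next
    case (Suc n)
    show ?case
    proof (cases "Suc n \<le> 2")
      case True
      then show ?thesis
        using Suc.prems unfolding colours_initial_segment_def
        by (simp add: max_def) (rule exI[of _ 2], auto)
    next
      case False
      then have "col \<in> set_pmf (colour_process a n \<bind> colour_step a (Suc n))"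
        using Suc.prems by simp
      then obtain c0 where c0: "c0 \<in> set_pmf (colour_process a n)"
        and col: "col \<in> set_pmf (colour_step a (Suc n) c0)"
        by (simp only: set_bind_pmf) blast
      obtain k where k: "k \<ge> 2" "set c0 = {0..<k}" and len: "length c0 = n"
        using Suc.IH[OF c0] False unfolding colours_initial_segment_def by auto
      then have "card (set c0) = k" "c0 \<noteq> []" by auto
      with set_pmf_colour_step[of c0 a "Suc n"] col
      consider "col = c0 @ [k]" | c where "c \<in> set c0" "col = c0 @ [c]"
        by blast
      then show ?thesis
      proof cases
        case 1
        with k have "set col = {0..<Suc k}" by auto
        with 1 k len False show ?thesis
          unfolding colours_initial_segment_def by (intro conjI) (simp, rule exI[of _ "Suc k"], simp)
      next
        case 2
        then have "set col = set c0" by auto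
        with 2 k len False show ?thesis
          unfolding colours_initial_segment_def by auto
      qed
    qed
  qed
  then show "length col = max n 2" "colours_initial_segment col" by auto
qed

lemma finite_set_pmf_colour_process: "finite (set_pmf (colour_process a n))"
proof (induction n)
  case (Suc n)
  have "c \<noteq> []" if "c \<in> set_pmf (colour_process a n)" for c
    using colour_process_support(1)[OF that] by auto
  then show ?case using Suc by (auto intro!: finite_set_pmf_colour_step)
qed simp

lemma map_pmf_take_colour_process:
  assumes "2 \<le> t" "t \<le> n"
  shows "map_pmf (take t) (colour_process a n) = colour_process a t"
  using assms(2)
proof (induction n rule: dec_induct)
  case (step n)
  have "map_pmf (take t) (colour_process a (Suc n))
      = colour_process a n \<bind> (\<lambda>c. map_pmf (take t) (colour_step a (Suc n) c))"
    using step assms(1) by (simp add: map_bind_pmf)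
  also have "\<dots> = colour_process a n \<bind> (\<lambda>c. return_pmf (take t c))"
  proof (intro bind_pmf_cong refl)
    fix c assume c: "c \<in> set_pmf (colour_process a n)"
    then have len: "length c = n" and "c \<noteq> []"
      using colour_process_support(1)[OF c] step assms(1) by auto
    have "take t x = take t c" if x: "x \<in> set_pmf (colour_step a (Suc n) c)" for x
    proof -
      obtain y where "x = c @ [y]"
        using x set_pmf_colour_step[OF \<open>c \<noteq> []\<close>] by blast
      then show ?thesis using len step by simp
    qed
    then show "map_pmf (take t) (colour_step a (Suc n) c) = return_pmf (take t c)"
      using map_pmf_cong[of _ _ "take t" "\<lambda>_. take t c"] by simp
  qed
  also have "\<dots> = colour_process a t"
    using step by (simp add: map_pmf_def[symmetric])
  finally show ?case .
qed (use colour_process_support(1)[of _ a t] assms(1) in \<open>auto intro: map_pmf_idI\<close>)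

lemma expectation_bind_pmf_finite:
  fixes f :: "'b \<Rightarrow> real"
  assumes "finite (set_pmf M)" "\<And>x. x \<in> set_pmf M \<Longrightarrow> finite (set_pmf (N x))"
  shows "measure_pmf.expectation (M \<bind> N) f
       = measure_pmf.expectation M (\<lambda>x. measure_pmf.expectation (N x) f)"
proof -
  have "measure_pmf.expectation (M \<bind> N) f = (\<Sum>a\<in>set_pmf M. pmf M a *\<^sub>R measure_pmf.expectation (N a) f)"
    by (rule pmf_expectation_bind) (use assms in auto)
  also have "\<dots> = measure_pmf.expectation M (\<lambda>x. measure_pmf.expectation (N x) f)"
    by (subst integral_measure_pmf[OF assms(1)]) auto
  finally show ?thesis .
qed

lemma prob_le_expectation:
  fixes f :: "'a \<Rightarrow> real"
  assumes "finite (set_pmf M)" "\<And>x. x \<in> set_pmf M \<Longrightarrow> f x \<ge> 0"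
    "\<And>x. x \<in> set_pmf M \<Longrightarrow> P x \<Longrightarrow> f x \<ge> 1"
  shows "measure_pmf.prob M {x. P x} \<le> measure_pmf.expectation M f"
proof -
  have "measure_pmf.prob M {x. P x} = measure_pmf.expectation M (indicator {x. P x})"
    by simp
  also have "\<dots> \<le> measure_pmf.expectation M f"
    by (intro integral_mono_AE integrable_measure_pmf_finite assms(1))
       (use assms in \<open>auto simp: AE_measure_pmf_iff indicator_def\<close>)
  finally show ?thesis .
qed

lemma seed_prob_pos_less_1:
  assumes "a > 0" "i \<ge> 3"
  shows "0 < seed_prob a i" "seed_prob a i < 1"
proof -
  have "exp 1 < real i" using e_less_272 assms(2) by linarith
  then have "1 < ln (real i)" using exp_gt_zero by (metis less_trans ln_exp ln_less_cancel_iff)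
  then show "0 < seed_prob a i" "seed_prob a i < 1"
    unfolding seed_prob_def using assms(1) by (auto intro: powr_less_one)
qed

lemma seed_prob_ge:
  assumes "a \<ge> 0" "3 \<le> i" "i \<le> t"
  shows "1 / ln (real t) powr a \<le> seed_prob a i"
proof -
  have "0 < ln (real i)" "ln (real i) \<le> ln (real t)" using assms by auto
  then have "ln (real t) powr (- a) \<le> ln (real i) powr (- a)"
    using assms(1) by (intro powr_mono2') auto
  then show ?thesis unfolding seed_prob_def by (simp add: powr_minus_divide)
qed

lemma expectation_colour_step:
  fixes f :: "nat list \<Rightarrow> real"
  assumes "col \<noteq> []" "a > 0" "i \<ge> 3"
  shows "measure_pmf.expectation (colour_step a i col) f =
     seed_prob a i * f (col @ [card (set col)])
     + (1 - seed_prob a i) * ((\<Sum>c\<in>set col. f (col @ [c])) / card (set col))"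
proof -
  have p: "0 \<le> seed_prob a i" "seed_prob a i \<le> 1"
    using seed_prob_pos_less_1[OF assms(2,3)] by auto
  have "measure_pmf.expectation (colour_step a i col) f
      = measure_pmf.expectation (bernoulli_pmf (seed_prob a i))
          (\<lambda>b. measure_pmf.expectation (if b then return_pmf (col @ [card (set col)])
                 else map_pmf (\<lambda>c. col @ [c]) (pmf_of_set (set col))) f)"
    unfolding colour_step_def
    by (rule expectation_bind_pmf_finite) (use assms(1) in auto)
  also have "\<dots> = seed_prob a i * f (col @ [card (set col)])
     + (1 - seed_prob a i) * ((\<Sum>c\<in>set col. f (col @ [c])) / card (set col))"
    using assms(1) p by (simp add: integral_pmf_of_set)
  finally show ?thesis .
qed

lemma expectation_colour_process_Suc:
  fixes f :: "nat list \<Rightarrow> real"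
  assumes "n \<ge> 2"
  shows "measure_pmf.expectation (colour_process a (Suc n)) f =
    measure_pmf.expectation (colour_process a n)
      (\<lambda>col. measure_pmf.expectation (colour_step a (Suc n) col) f)"
proof -
  have "x \<noteq> []" if "x \<in> set_pmf (colour_process a n)" for x
    using colour_process_support(1)[OF that] by auto
  then show ?thesis
    using assms by (simp add: expectation_bind_pmf_finite finite_set_pmf_colour_process
        finite_set_pmf_colour_step)
qed

section \<open>Number of colours\<close>

lemma expectation_half_power_colours_step:
  assumes "a > 0" "i \<ge> 3" "colours_initial_segment col"
  shows "measure_pmf.expectation (colour_step a i col) (\<lambda>c. (1/2::real) ^ card (set c))
       = (1/2) ^ card (set col) * (1 - seed_prob a i / 2)"
proof -
  note fresh = colours_initial_segment_fresh[OF assms(3)]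
  then have new: "card (set (col @ [card (set col)])) = Suc (card (set col))" by simp
  have old: "(\<Sum>c\<in>set col. (1/2::real) ^ card (set (col @ [c])))
      = card (set col) * (1/2) ^ card (set col)"
    by (simp add: insert_absorb)
  show ?thesis
    unfolding expectation_colour_step[OF fresh(1) assms(1,2)] new old
    using colours_initial_segmentD(2)[OF assms(3)] fresh(1) by (simp add: field_simps)
qed

lemma expectation_half_power_colours:
  assumes "a > 0" "s \<ge> 2"
  shows "measure_pmf.expectation (colour_process a s) (\<lambda>c. (1/2::real) ^ card (set c))
       \<le> (1/4) * exp (- (\<Sum>i=3..s. seed_prob a i) / 2)"
  using assms(2)
proof (induction s rule: dec_induct)
  case base
  then show ?case by (simp add: numeral_2_eq_2)
next
  case (step n)
  let ?E = "\<lambda>n. measure_pmf.expectation (colour_process a n) (\<lambda>c. (1/2::real) ^ card (set c))"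
  have p: "0 < seed_prob a (Suc n)" "seed_prob a (Suc n) < 1"
    using seed_prob_pos_less_1[OF assms(1)] step(1) by auto
  have "?E (Suc n) = measure_pmf.expectation (colour_process a n)
          (\<lambda>col. (1/2) ^ card (set col) * (1 - seed_prob a (Suc n) / 2))"
    unfolding expectation_colour_process_Suc[OF step(1)]
    using colour_process_support(2) expectation_half_power_colours_step[OF assms(1)] step(1)
    by (intro integral_cong_AE) (auto simp: AE_measure_pmf_iff)
  also have "\<dots> = ?E n * (1 - seed_prob a (Suc n) / 2)"
    by simp
  also have "\<dots> \<le> (1/4) * exp (- (\<Sum>i=3..n. seed_prob a i) / 2) * exp (- seed_prob a (Suc n) / 2)"
    using step.IH p exp_ge_add_one_self[of "- seed_prob a (Suc n) / 2"]
    by (intro mult_mono) auto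
  also have "\<dots> = (1/4) * exp (- (\<Sum>i=3..Suc n. seed_prob a i) / 2)"
    using step(1) by (simp add: exp_add[symmetric] field_simps)
  finally show ?case .
qed

text \<open>A Chernoff bound: before time \<open>r \<le> t\<close> about \<open>(r - 2) / ln t ^ a\<close> seeds are expected,
  and fewer than a quarter of that is exponentially unlikely.\<close>

lemma prob_few_colours:
  assumes "a > 0" "3 \<le> r" "r \<le> t"
  defines "x \<equiv> (real r - 2) / (4 * ln (real t) powr a)"
  shows "measure_pmf.prob (colour_process a r) {col. real (card (set col)) < x} \<le> exp (- x)"
proof -
  have A: "ln (real t) powr a > 0" using assms(2,3) by simp
  have x: "x \<ge> 0" unfolding x_def using A assms(2) by simp
  have "4 * x = real (card {3..r}) * (1 / ln (real t) powr a)"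
    unfolding x_def using assms(2) A by (simp add: field_simps)
  also have "\<dots> \<le> (\<Sum>i=3..r. seed_prob a i)"
    using seed_prob_ge[of a _ t] assms by (intro sum_bounded_below) auto
  finally have sum: "4 * x \<le> (\<Sum>i=3..r. seed_prob a i)" .
  have "measure_pmf.prob (colour_process a r) {col. real (card (set col)) < x}
      \<le> measure_pmf.expectation (colour_process a r) (\<lambda>c. 2 powr x * (1/2::real) ^ card (set c))"
  proof (rule prob_le_expectation[OF finite_set_pmf_colour_process])
    fix c :: "nat list" assume "real (card (set c)) < x"
    then have "1 \<le> 2 powr (x - card (set c))" by (intro ge_one_powr_ge_zero) auto
    also have "\<dots> = 2 powr x / 2 ^ card (set c)"
      by (simp add: powr_diff powr_realpow)
    finally show "1 \<le> 2 powr x * (1/2::real) ^ card (set c)"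
      by (simp add: power_one_over)
  qed simp
  also have "\<dots> = 2 powr x * measure_pmf.expectation (colour_process a r) (\<lambda>c. (1/2::real) ^ card (set c))"
    by simp
  also have "\<dots> \<le> 2 powr x * ((1/4) * exp (- (\<Sum>i=3..r. seed_prob a i) / 2))"
    using expectation_half_power_colours[OF assms(1), of r] assms(2) by (intro mult_left_mono) auto
  also have "\<dots> \<le> 2 powr x * exp (- (2 * x))"
  proof -
    have "exp (- (\<Sum>i=3..r. seed_prob a i) / 2) \<le> exp (- (2 * x))"
      using sum by (subst exp_le_cancel_iff) linarith
    then have "(1/4) * exp (- (\<Sum>i=3..r. seed_prob a i) / 2) \<le> exp (- (2 * x))"
      using exp_ge_zero[of "- (\<Sum>i=3..r. seed_prob a i) / 2"] by linarith
    then show ?thesis by (rule mult_left_mono) simp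
  qed
  also have "\<dots> \<le> exp (- x)"
  proof -
    have "x * ln 2 \<le> x" using x ln_le_minus_one[of 2] by (simp add: mult_left_le)
    then show ?thesis by (simp add: powr_def exp_add[symmetric] mult.commute)
  qed
  finally show ?thesis .
qed

section \<open>Exponential moment of the class sizes\<close>

definition colour_count :: "nat \<Rightarrow> nat list \<Rightarrow> nat" where
  "colour_count c col = length (filter (\<lambda>x. x = c) col)"

definition count_potential :: "real \<Rightarrow> nat list \<Rightarrow> real" where
  "count_potential q col = (\<Sum>c\<in>set col. q ^ colour_count c col)"

definition many_colours :: "nat \<Rightarrow> (nat \<Rightarrow> real) \<Rightarrow> nat list \<Rightarrow> bool" where
  "many_colours s0 m col \<longleftrightarrow>
     (\<forall>r. s0 \<le> r \<and> r \<le> length col \<longrightarrow> m r \<le> real (card (set (take r col))))"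

definition restricted_potential :: "nat \<Rightarrow> (nat \<Rightarrow> real) \<Rightarrow> real \<Rightarrow> nat list \<Rightarrow> real" where
  "restricted_potential s0 m q col = (if many_colours s0 m col then count_potential q col else 0)"

lemma count_potential_nonneg: "q \<ge> 0 \<Longrightarrow> count_potential q col \<ge> 0"
  unfolding count_potential_def by (intro sum_nonneg) auto

lemma restricted_potential_nonneg: "q \<ge> 0 \<Longrightarrow> restricted_potential s0 m q col \<ge> 0"
  unfolding restricted_potential_def by (simp add: count_potential_nonneg)

lemma count_potential_snoc_new:
  assumes "c \<notin> set col"
  shows "count_potential q (col @ [c]) = count_potential q col + q"
proof -
  have "colour_count c (col @ [c]) = 1"
    using assms unfolding colour_count_def by (simp add: filter_empty_conv) blast
  moreover have "(\<Sum>x\<in>set col. q ^ colour_count x (col @ [c])) = (\<Sum>x\<in>set col. q ^ colour_count x col)"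
    using assms by (intro sum.cong refl) (auto simp: colour_count_def)
  ultimately show ?thesis
    using assms unfolding count_potential_def by (simp add: add.commute)
qed

lemma count_potential_snoc_old:
  assumes "c \<in> set col"
  shows "count_potential q (col @ [c]) = count_potential q col + (q - 1) * q ^ colour_count c col"
proof -
  have "count_potential q (col @ [c])
      = (\<Sum>x\<in>set col. q ^ colour_count x col + (if x = c then (q - 1) * q ^ colour_count c col else 0))"
    unfolding count_potential_def using assms
    by (intro sum.cong) (auto simp: colour_count_def algebra_simps insert_absorb)
  also have "\<dots> = count_potential q col + (q - 1) * q ^ colour_count c col"
    unfolding count_potential_def sum.distrib using assms by simp
  finally show ?thesis .
qed

lemma sum_count_potential_snoc:
  fixes q :: real
  shows "(\<Sum>c\<in>set col. count_potential q (col @ [c])) = (card (set col) + (q - 1)) * count_potential q col"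
proof -
  have "(\<Sum>c\<in>set col. count_potential q (col @ [c]))
      = (\<Sum>c\<in>set col. count_potential q col + (q - 1) * q ^ colour_count c col)"
    by (intro sum.cong refl) (simp add: count_potential_snoc_old)
  also have "\<dots> = card (set col) * count_potential q col + (q - 1) * count_potential q col"
    by (simp add: sum.distrib sum_distrib_left[symmetric] count_potential_def)
  finally show ?thesis by (simp add: algebra_simps)
qed

lemma many_colours_snocD: "many_colours s0 m (col @ [x]) \<Longrightarrow> many_colours s0 m col"
  unfolding many_colours_def by auto

lemma expectation_count_potential_step:
  fixes q :: real
  assumes "a > 0" "i \<ge> 3" "colours_initial_segment col"
  shows "measure_pmf.expectation (colour_step a i col) (count_potential q)
       = count_potential q col + seed_prob a i * q
         + (1 - seed_prob a i) * ((q - 1) * count_potential q col / card (set col))"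
proof -
  note fresh = colours_initial_segment_fresh[OF assms(3)]
  have k: "card (set col) > 0" using colours_initial_segmentD(2)[OF assms(3)] by simp
  have "(card (set col) + (q - 1)) * count_potential q col / card (set col)
      = count_potential q col + (q - 1) * count_potential q col / card (set col)"
    using k fresh(1) by (simp add: add_divide_distrib distrib_right)
  then show ?thesis
    unfolding expectation_colour_step[OF fresh(1) assms(1,2)] count_potential_snoc_new[OF fresh(2)]
      sum_count_potential_snoc
    by (simp add: algebra_simps)
qed

text \<open>On the event \<open>many_colours\<close> a uniformly chosen old colour raises the potential by the
  factor \<open>1 + (q - 1) / #colours \<le> 1 + (q - 1) / \<mu>\<close>; off the event the potential is \<open>0\<close> for
  good, as \<open>many_colours\<close> only gets harder to satisfy.\<close>

lemma expectation_restricted_potential_step: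
  assumes "a > 0" "i \<ge> 3" "colours_initial_segment col" "q \<ge> 1" "\<mu> > 0"
    and "many_colours s0 m col \<Longrightarrow> \<mu> \<le> real (card (set col))"
  shows "measure_pmf.expectation (colour_step a i col) (restricted_potential s0 m q)
       \<le> restricted_potential s0 m q col * (1 + (q - 1) / \<mu>) + q"
proof (cases "many_colours s0 m col")
  case True
  let ?S = "count_potential q col" and ?k = "card (set col)" and ?p = "seed_prob a i"
  have S: "?S \<ge> 0" using count_potential_nonneg assms(4) by simp
  have p: "0 \<le> ?p" "?p \<le> 1" using seed_prob_pos_less_1[OF assms(1,2)] by auto
  have "measure_pmf.expectation (colour_step a i col) (restricted_potential s0 m q)
      \<le> measure_pmf.expectation (colour_step a i col) (count_potential q)"
    using colours_initial_segment_fresh(1)[OF assms(3)] count_potential_nonneg assms(4)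
    by (intro integral_mono integrable_measure_pmf_finite finite_set_pmf_colour_step)
       (auto simp: restricted_potential_def)
  also have "\<dots> = ?S + ?p * q + (1 - ?p) * ((q - 1) * ?S / ?k)"
    by (rule expectation_count_potential_step[OF assms(1-3)])
  also have "\<dots> \<le> ?S + q + (q - 1) * ?S / \<mu>"
  proof -
    have X: "0 \<le> (q - 1) * ?S / ?k" using assms(4) S by simp
    have "(q - 1) * ?S / ?k \<le> (q - 1) * ?S / \<mu>"
      using assms(4,5) assms(6)[OF True] S by (intro divide_left_mono) auto
    moreover have "(1 - ?p) * ((q - 1) * ?S / ?k) \<le> (q - 1) * ?S / ?k"
      using X p by (intro mult_left_le_one_le) auto
    moreover have "?p * q \<le> q" using p assms(4) by (intro mult_left_le_one_le) auto
    ultimately show ?thesis by linarith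
  qed
  also have "\<dots> = restricted_potential s0 m q col * (1 + (q - 1) / \<mu>) + q"
    using True by (simp add: restricted_potential_def field_simps)
  finally show ?thesis .
next
  case False
  have "restricted_potential s0 m q x = 0" if x: "x \<in> set_pmf (colour_step a i col)" for x
  proof -
    obtain y where "x = col @ [y]"
      using set_pmf_colour_step[OF colours_initial_segment_fresh(1)[OF assms(3)], of a i] x by blast
    then have "\<not> many_colours s0 m x" using False many_colours_snocD by blast
    then show ?thesis unfolding restricted_potential_def by simp
  qed
  then have "measure_pmf.expectation (colour_step a i col) (restricted_potential s0 m q) = 0"
    by (subst integral_cong_AE[where g = "\<lambda>_. 0"]) (auto simp: AE_measure_pmf_iff)
  then show ?thesis using False assms(4) by (simp add: restricted_potential_def)
qed

lemma expectation_restricted_potential_le: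
  fixes \<mu> :: "nat \<Rightarrow> real"
  assumes "a > 0" "q \<ge> 1" "\<And>r. \<mu> r > 0"
    and "\<And>col. colours_initial_segment col \<Longrightarrow> many_colours s0 m col \<Longrightarrow>
           \<mu> (length col) \<le> real (card (set col))"
    and "t \<ge> 2"
  shows "measure_pmf.expectation (colour_process a t) (restricted_potential s0 m q)
       \<le> real t * q * (\<Prod>r\<in>{2..<t}. 1 + (q - 1) / \<mu> r)"
proof -
  let ?V = "\<lambda>j. \<Prod>r\<in>{j..<t}. 1 + (q - 1) / \<mu> r"
  let ?E = "\<lambda>j. measure_pmf.expectation (colour_process a j) (restricted_potential s0 m q)"
  have factor: "1 \<le> 1 + (q - 1) / \<mu> r" for r using assms(2) assms(3)[of r] by simp
  then have V: "0 \<le> ?V j" "?V j \<le> ?V 2" if "2 \<le> j" for j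
    using that by (auto intro!: prod_nonneg prod_mono2 intro: order_trans[OF zero_le_one])
  have "?E j * ?V j \<le> real j * q * ?V 2" if "2 \<le> j" "j \<le> t" for j
    using that
  proof (induction j rule: dec_induct)
    case base
    have "count_potential q [0, 1] = 2 * q"
      by (simp add: count_potential_def colour_count_def)
    then have "?E 2 \<le> 2 * q"
      using assms(2) by (simp add: numeral_2_eq_2 restricted_potential_def)
    then show ?case using V[of 2] assms(2) by (simp add: mult_right_mono)
  next
    case (step n)
    have step_bound: "measure_pmf.expectation (colour_step a (Suc n) col) (restricted_potential s0 m q)
        \<le> restricted_potential s0 m q col * (1 + (q - 1) / \<mu> n) + q"
      if "col \<in> set_pmf (colour_process a n)" for col
      using colour_process_support[OF that] step(1) assms(1-4)
      by (intro expectation_restricted_potential_step) auto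
    have "?E (Suc n) \<le> measure_pmf.expectation (colour_process a n)
            (\<lambda>col. restricted_potential s0 m q col * (1 + (q - 1) / \<mu> n) + q)"
      unfolding expectation_colour_process_Suc[OF step(1)]
      by (intro integral_mono_AE integrable_measure_pmf_finite finite_set_pmf_colour_process)
         (use step_bound in \<open>auto simp: AE_measure_pmf_iff\<close>)
    also have "\<dots> = ?E n * (1 + (q - 1) / \<mu> n) + q"
      by (simp add: integrable_measure_pmf_finite finite_set_pmf_colour_process)
    finally have "?E (Suc n) * ?V (Suc n) \<le> (?E n * (1 + (q - 1) / \<mu> n) + q) * ?V (Suc n)"
      using V[of "Suc n"] step(1) by (intro mult_right_mono) auto
    also have "\<dots> = ?E n * ?V n + q * ?V (Suc n)"
      using step by (simp add: prod.atLeast_Suc_lessThan algebra_simps)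
    also have "\<dots> \<le> real n * q * ?V 2 + q * ?V 2"
      using step.IH step.prems V[of "Suc n"] step(1) assms(2) by (intro add_mono mult_left_mono) auto
    finally show ?case by (simp add: algebra_simps)
  qed
  from this[of t] show ?thesis using assms(5) by simp
qed

section \<open>Large classes at a fixed time\<close>

lemma sum_inverse_minus_two_le_ln:
  assumes "t \<ge> 3"
  shows "(\<Sum>r\<in>{3..<t}. 1 / (real r - 2)) \<le> 1 + ln (real t)"
proof (cases "t = 3")
  case False
  have "(\<Sum>r\<in>{3..<t}. 1 / (real r - 2)) = harm (t - 3)"
    unfolding harm_def using assms
    by (intro sum.reindex_bij_witness[of _ "\<lambda>k. k + 2" "\<lambda>r. r - 2"])
       (auto simp: of_nat_diff divide_inverse)
  also have "\<dots> \<le> 1 + ln (real (t - 3))"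
  proof -
    have "1 \<le> t - 3" using False assms by simp
    then have "harm (t - 3) - ln (real (t - 3)) \<le> harm 1 - ln (real 1)"
      by (intro euler_mascheroni_sequence_decreasing) auto
    then show ?thesis by (simp add: harm_Suc harm_def[of 0])
  qed
  also have "\<dots> \<le> 1 + ln (real t)"
    using False assms by simp
  finally show ?thesis .
qed simp

lemma prob_colour_process_take:
  assumes "2 \<le> r" "r \<le> t"
  shows "measure_pmf.prob (colour_process a t) {col. P (take r col)}
       = measure_pmf.prob (colour_process a r) {col. P col}"
  using map_pmf_take_colour_process[OF assms, of a, symmetric] by (simp add: vimage_def)

definition has_large_class :: "real \<Rightarrow> real \<Rightarrow> nat \<Rightarrow> nat list \<Rightarrow> bool" where
  "has_large_class C a t col \<longleftrightarrow>
     (\<exists>c\<in>set col. C * ln (real t) powr (a + 1) < real (colour_count c col))"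

locale class_bound_at_time =
  fixes a :: real and t :: nat
  assumes a_pos: "a > 0" and ln_ge_2: "2 \<le> ln (real t)" and ln_powr_ge_2: "2 \<le> ln (real t) powr a"
begin

text \<open>\<open>s0\<close> is chosen so that \<open>m r \<ge> 4 L\<close> from time \<open>s0\<close> on; \<open>\<mu> r\<close> is a lower bound for the
  number of colours at time \<open>r\<close> on the event \<open>many_colours s0 m\<close>.\<close>

definition L :: real where "L = ln (real t)"
definition A :: real where "A = L powr a"
definition q :: real where "q = 1 + 1 / A"
definition m :: "nat \<Rightarrow> real" where "m r = (real r - 2) / (4 * A)"
definition s0 :: nat where "s0 = nat \<lceil>16 * L * A\<rceil> + 3"
definition \<mu> :: "nat \<Rightarrow> real" where "\<mu> r = (if r < s0 then 2 else m r)"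

lemma L_ge_2: "L \<ge> 2" and A_ge_2: "A \<ge> 2"
  using ln_ge_2 ln_powr_ge_2 unfolding L_def A_def by auto

lemma exp_L: "exp L = real t"
  using ln_ge_2 unfolding L_def by (cases "t = 0") auto

lemma t_ge_3: "t \<ge> 3"
  using exp_ge_add_one_self[of L] exp_L L_ge_2 by linarith

lemma q_ge_1: "q \<ge> 1" and q_le_2: "q \<le> 2"
  using A_ge_2 unfolding q_def by auto

lemma s0_ge_3: "s0 \<ge> 3"
  unfolding s0_def by simp

lemma s0_le: "real s0 \<le> 16 * L * A + 4"
proof -
  have "0 \<le> 16 * L * A" using L_ge_2 A_ge_2 by simp
  then have "real (nat \<lceil>16 * L * A\<rceil>) \<le> 16 * L * A + 1" by linarith
  then show ?thesis unfolding s0_def by simp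
qed

lemma m_ge_4L: "r \<ge> s0 \<Longrightarrow> 4 * L \<le> m r"
  using A_ge_2 unfolding s0_def m_def by (simp add: field_simps) linarith

lemma \<mu>_pos: "\<mu> r > 0"
  using m_ge_4L[of r] L_ge_2 unfolding \<mu>_def by auto

lemma growth_factor_ge_1: "1 \<le> 1 + (q - 1) / \<mu> r"
  using q_ge_1 \<mu>_pos[of r] by simp

lemma \<mu>_le_card:
  assumes "colours_initial_segment col" "many_colours s0 m col"
  shows "\<mu> (length col) \<le> real (card (set col))"
proof (cases "length col < s0")
  case False
  then show ?thesis
    using spec[OF assms(2)[unfolded many_colours_def], of "length col"] unfolding \<mu>_def by simp
qed (use colours_initial_segmentD(2)[OF assms(1)] in \<open>simp add: \<mu>_def\<close>)

lemma ln_powr_plus_one_eq: "ln (real t) powr (a + 1) = L * A"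
  using L_ge_2 unfolding A_def L_def by (simp add: powr_add)

lemma prob_not_many_colours:
  "measure_pmf.prob (colour_process a t) {col. \<not> many_colours s0 m col} \<le> exp (- 3 * L)"
proof -
  let ?B = "\<lambda>r. {col. real (card (set (take r col))) < m r}"
  have "measure_pmf.prob (colour_process a t) {col. \<not> many_colours s0 m col}
      \<le> measure_pmf.prob (colour_process a t) (\<Union>r\<in>{s0..t}. ?B r)"
    using colour_process_support(1)[of _ a t] t_ge_3
    by (intro measure_pmf.finite_measure_mono_AE)
       (auto simp: AE_measure_pmf_iff many_colours_def not_le)
  also have "\<dots> \<le> (\<Sum>r\<in>{s0..t}. measure_pmf.prob (colour_process a t) (?B r))"
    by (rule measure_pmf.finite_measure_subadditive_finite) auto
  also have "\<dots> \<le> (\<Sum>r\<in>{s0..t}. exp (- 4 * L))"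
  proof (rule sum_mono)
    fix r assume "r \<in> {s0..t}"
    then have r: "3 \<le> r" "r \<le> t" "s0 \<le> r" using s0_ge_3 by auto
    have "measure_pmf.prob (colour_process a t) (?B r)
        = measure_pmf.prob (colour_process a r) {col. real (card (set col)) < m r}"
      using prob_colour_process_take[of r t a "\<lambda>col. real (card (set col)) < m r"] r by simp
    also have "\<dots> \<le> exp (- m r)"
      using prob_few_colours[OF a_pos r(1,2)] unfolding m_def A_def L_def by simp
    also have "\<dots> \<le> exp (- 4 * L)"
      using m_ge_4L[OF r(3)] by simp
    finally show "measure_pmf.prob (colour_process a t) (?B r) \<le> exp (- 4 * L)" .
  qed
  also have "\<dots> \<le> real t * exp (- 4 * L)"
    using s0_ge_3 by (simp add: mult_right_mono)
  also have "\<dots> = exp (- 3 * L)"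
    by (simp flip: exp_L exp_add)
  finally show ?thesis .
qed

lemma sum_growth_exponents_le: "(\<Sum>r\<in>{2..<t}. (q - 1) / \<mu> r) \<le> 12 * L + 5"
proof -
  have term_le: "(q - 1) / \<mu> r
      \<le> (if r < s0 then 1 / (2 * A) else 0) + (if 3 \<le> r then 4 / (real r - 2) else 0)" for r
  proof (cases "r < s0")
    case True
    have "(if 3 \<le> r then 4 / (real r - 2) else 0) \<ge> 0" by auto
    then show ?thesis using True unfolding \<mu>_def q_def by simp
  next
    case False
    then have "(q - 1) / \<mu> r = 4 / (real r - 2)" "3 \<le> r"
      using A_ge_2 s0_ge_3 unfolding \<mu>_def q_def m_def by (auto simp: field_simps)
    then show ?thesis using False by simp
  qed
  have "(\<Sum>r\<in>{2..<t}. if r < s0 then 1 / (2 * A) else 0) = (\<Sum>r\<in>{2..<t} \<inter> {..<s0}. 1 / (2 * A))"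
    by (subst sum.inter_restrict) auto
  also have "\<dots> \<le> (16 * L * A + 4) / (2 * A)"
    using card_mono[of "{..<s0}" "{2..<t} \<inter> {..<s0}"] s0_le A_ge_2
    by (simp add: divide_right_mono)
  also have "\<dots> \<le> 8 * L + 1"
    using A_ge_2 by (simp add: field_simps)
  finally have early: "(\<Sum>r\<in>{2..<t}. if r < s0 then 1 / (2 * A) else 0) \<le> 8 * L + 1" .
  have "{2..<t} = insert 2 {3..<t}" using t_ge_3 by auto
  then have "(\<Sum>r\<in>{2..<t}. if 3 \<le> r then 4 / (real r - 2) else 0)
      = 4 * (\<Sum>r\<in>{3..<t}. 1 / (real r - 2))"
    by (simp add: sum_distrib_left)
  also have "\<dots> \<le> 4 * (1 + L)"
    using sum_inverse_minus_two_le_ln[OF t_ge_3] unfolding L_def by simp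
  finally have late: "(\<Sum>r\<in>{2..<t}. if 3 \<le> r then 4 / (real r - 2) else 0) \<le> 4 + 4 * L"
    by simp
  have "(\<Sum>r\<in>{2..<t}. (q - 1) / \<mu> r) \<le> (\<Sum>r\<in>{2..<t}.
      (if r < s0 then 1 / (2 * A) else 0) + (if 3 \<le> r then 4 / (real r - 2) else 0))"
    by (intro sum_mono term_le)
  then show ?thesis using early late by (simp add: sum.distrib)
qed

lemma prod_growth_le: "(\<Prod>r\<in>{2..<t}. 1 + (q - 1) / \<mu> r) \<le> exp (12 * L + 5)"
proof -
  have "(\<Prod>r\<in>{2..<t}. 1 + (q - 1) / \<mu> r) \<le> (\<Prod>r\<in>{2..<t}. exp ((q - 1) / \<mu> r))"
    using growth_factor_ge_1 exp_ge_add_one_self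
    by (intro prod_mono) (auto intro: order_trans[OF zero_le_one])
  also have "\<dots> = exp (\<Sum>r\<in>{2..<t}. (q - 1) / \<mu> r)"
    by (simp add: exp_sum)
  also have "\<dots> \<le> exp (12 * L + 5)"
    using sum_growth_exponents_le by simp
  finally show ?thesis .
qed

lemma exp_le_q_powr: "exp (20 * L) \<le> q powr (40 * L * A)"
proof -
  have x: "0 \<le> 1 / A" "1 / A \<le> 1 / 2" using A_ge_2 by auto
  have "1 / (2 * A) \<le> 1 / A - (1 / A)\<^sup>2"
    using mult_left_mono[OF x(2) x(1)] by (simp add: power2_eq_square)
  also have "\<dots> \<le> ln q"
    unfolding q_def using ln_one_plus_pos_lower_bound[of "1 / A"] x by simp
  finally have "20 * L \<le> 40 * L * A * ln q"
    using L_ge_2 A_ge_2 mult_left_mono[of "1 / (2 * A)" "ln q" "40 * L * A"]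
    by (simp add: field_simps)
  then show ?thesis
    using q_ge_1 by (simp add: powr_def mult.commute)
qed

lemma potential_bound_le: "real t * q * (\<Prod>r\<in>{2..<t}. 1 + (q - 1) / \<mu> r) / exp (20 * L) \<le> exp (- 3 * L)"
proof -
  have "real t * q * (\<Prod>r\<in>{2..<t}. 1 + (q - 1) / \<mu> r) / exp (20 * L)
      \<le> exp L * 2 * exp (12 * L + 5) / exp (20 * L)"
    using q_ge_1 q_le_2 prod_growth_le exp_L growth_factor_ge_1
    by (intro divide_right_mono mult_mono prod_nonneg) (auto intro: order_trans[OF zero_le_one])
  also have "\<dots> = 2 * exp (L + (12 * L + 5) - 20 * L)"
    unfolding exp_diff exp_add by (simp add: field_simps)
  also have "\<dots> \<le> exp (4 * L - 5) * exp (L + (12 * L + 5) - 20 * L)"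
    using exp_ge_add_one_self[of "4 * L - 5"] L_ge_2 by (intro mult_right_mono) auto
  also have "\<dots> = exp (- 3 * L)"
    by (simp flip: exp_add add: algebra_simps)
  finally show ?thesis .
qed

lemma prob_large_class_many_colours:
  "measure_pmf.prob (colour_process a t) {col. many_colours s0 m col \<and> has_large_class 40 a t col}
     \<le> exp (- 3 * L)"
proof -
  define T where "T = q powr (40 * L * A)"
  have T: "exp (20 * L) \<le> T" using exp_le_q_powr unfolding T_def .
  then have T_pos: "T > 0" using exp_gt_zero order.strict_trans2 by blast
  have "measure_pmf.prob (colour_process a t) {col. many_colours s0 m col \<and> has_large_class 40 a t col}
      \<le> measure_pmf.expectation (colour_process a t) (\<lambda>col. restricted_potential s0 m q col / T)"
  proof (rule prob_le_expectation[OF finite_set_pmf_colour_process])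
    fix col assume "many_colours s0 m col \<and> has_large_class 40 a t col"
    then obtain c where "many_colours s0 m col" "c \<in> set col" "40 * (L * A) < colour_count c col"
      unfolding has_large_class_def ln_powr_plus_one_eq by blast
    then have "T \<le> q ^ colour_count c col"
      unfolding T_def using q_ge_1 by (auto simp flip: powr_realpow intro: powr_mono)
    also have "\<dots> \<le> restricted_potential s0 m q col"
      unfolding restricted_potential_def count_potential_def
      using \<open>many_colours s0 m col\<close> \<open>c \<in> set col\<close> q_ge_1 by (auto intro: member_le_sum)
    finally show "1 \<le> restricted_potential s0 m q col / T" using T_pos by simp
  qed (use restricted_potential_nonneg q_ge_1 T_pos in auto)
  also have "\<dots> = measure_pmf.expectation (colour_process a t) (restricted_potential s0 m q) / T"
    by simp
  also have "\<dots> \<le> real t * q * (\<Prod>r\<in>{2..<t}. 1 + (q - 1) / \<mu> r) / exp (20 * L)"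
  proof -
    let ?E = "measure_pmf.expectation (colour_process a t) (restricted_potential s0 m q)"
    have "0 \<le> ?E"
      using restricted_potential_nonneg q_ge_1 by (intro Bochner_Integration.integral_nonneg) auto
    then have "?E / T \<le> ?E / exp (20 * L)"
      using T T_pos by (intro divide_left_mono) auto
    also have "\<dots> \<le> real t * q * (\<Prod>r\<in>{2..<t}. 1 + (q - 1) / \<mu> r) / exp (20 * L)"
      using expectation_restricted_potential_le[OF a_pos q_ge_1 \<mu>_pos \<mu>_le_card] t_ge_3
      by (intro divide_right_mono) auto
    finally show ?thesis .
  qed
  also have "\<dots> \<le> exp (- 3 * L)"
    by (rule potential_bound_le)
  finally show ?thesis .
qed

lemma prob_has_large_class:
  "measure_pmf.prob (colour_process a t) {col. has_large_class 40 a t col} \<le> 2 * exp (- 3 * L)"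
proof -
  have "measure_pmf.prob (colour_process a t) {col. has_large_class 40 a t col}
      \<le> measure_pmf.prob (colour_process a t)
           ({col. \<not> many_colours s0 m col} \<union> {col. many_colours s0 m col \<and> has_large_class 40 a t col})"
    by (rule measure_pmf.finite_measure_mono) auto
  also have "\<dots> \<le> measure_pmf.prob (colour_process a t) {col. \<not> many_colours s0 m col}
      + measure_pmf.prob (colour_process a t) {col. many_colours s0 m col \<and> has_large_class 40 a t col}"
    by (rule measure_Un_le) auto
  also have "\<dots> \<le> 2 * exp (- 3 * L)"
    using prob_not_many_colours prob_large_class_many_colours by simp
  finally show ?thesis .
qed

end

lemma prob_has_large_class_le:
  assumes "a > 0" "2 \<le> ln (real t)" "2 \<le> ln (real t) powr a"
  shows "measure_pmf.prob (colour_process a t) {col. has_large_class 40 a t col}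
       \<le> 2 / (real t * (real t - 1))"
proof -
  interpret class_bound_at_time a t
    using assms by unfold_locales
  have t: "real t > 1" using t_ge_3 by simp
  have "exp (- 3 * L) * real t ^ 3 = 1"
    by (simp flip: exp_L exp_of_nat_mult exp_add)
  then have "exp (- 3 * L) = 1 / real t ^ 3"
    using t by (simp add: field_simps)
  also have "\<dots> \<le> 1 / (real t * (real t - 1))"
  proof -
    have "real t * (real t - 1) \<le> real t ^ 3"
      using t by (smt (verit, best) mult.commute ordered_semiring_strict_class.mult_strict_left_mono
          power3_eq_cube power_less_power_Suc)
    then show ?thesis using t by (intro divide_left_mono mult_pos_pos) auto
  qed
  finally show ?thesis
    using prob_has_large_class by simp
qed

section \<open>Union bound over time\<close>

lemma sum_inverse_pronic_le:
  assumes "2 \<le> k"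
  shows "(\<Sum>t\<in>{k..n}. 1 / (real t * (real t - 1))) \<le> 1 / (real k - 1)"
proof (cases "k \<le> n")
  case True
  have "(\<Sum>t\<in>{k..n}. 1 / (real t * (real t - 1)))
      = (\<Sum>t\<in>{Suc (k - 1)..n}. (- 1 / real t) - (- 1 / real (t - 1)))"
    using assms by (intro sum.cong) (auto simp: field_simps of_nat_diff)
  also have "\<dots> = 1 / real (k - 1) - 1 / real n"
    using True by (subst sum_telescope'') auto
  also have "\<dots> \<le> 1 / (real k - 1)"
    using assms by (simp add: of_nat_diff)
  finally show ?thesis .
qed (use assms in simp)

definition small_classes :: "real \<Rightarrow> real \<Rightarrow> nat \<Rightarrow> nat list \<Rightarrow> bool" where
  "small_classes C a n col \<longleftrightarrow>
     (\<forall>c\<in>set col. real (comm_size_at col n c) \<le> C * ln (real n) powr (a + 1)) \<and>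
     (\<forall>t. ln (real n) powr (a + 1) \<le> real t \<and> t \<le> n \<longrightarrow>
        (\<forall>c\<in>set (take t col). real (comm_size_at col t c) \<le> C * ln (real t) powr (a + 1)))"

lemma not_small_classes_imp_has_large_class:
  assumes "\<not> small_classes C a n col" "length col = n" "ln (real n) powr (a + 1) \<le> real n"
  shows "\<exists>t. ln (real n) powr (a + 1) \<le> real t \<and> t \<le> n \<and> has_large_class C a t (take t col)"
proof (cases "\<forall>c\<in>set col. real (comm_size_at col n c) \<le> C * ln (real n) powr (a + 1)")
  case True
  then show ?thesis
    using assms(1) unfolding small_classes_def has_large_class_def comm_size_at_def colour_count_def
    by (auto simp: not_le)
next
  case False
  then have "has_large_class C a n (take n col)"
    using assms(2) unfolding has_large_class_def comm_size_at_def colour_count_def by (auto simp: not_le)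
  then show ?thesis
    using assms(3) by (intro exI[of _ n]) simp
qed

lemma prob_not_small_classes_le:
  assumes "2 \<le> t0" "t0 \<le> n" "ln (real n) powr (a + 1) \<le> real n"
    and "\<And>t. ln (real n) powr (a + 1) \<le> real t \<Longrightarrow> t0 \<le> t"
  shows "measure_pmf.prob (colour_process a n) {col. \<not> small_classes C a n col}
       \<le> (\<Sum>t\<in>{t0..n}. measure_pmf.prob (colour_process a t) {col. has_large_class C a t col})"
proof -
  let ?P = "measure_pmf.prob (colour_process a n)"
  have "?P {col. \<not> small_classes C a n col}
      \<le> ?P (\<Union>t\<in>{t0..n}. {col. has_large_class C a t (take t col)})"
  proof (rule measure_pmf.finite_measure_mono_AE)
    show "AE col in measure_pmf (colour_process a n).
        col \<in> {col. \<not> small_classes C a n col} \<longrightarrow>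
        col \<in> (\<Union>t\<in>{t0..n}. {col. has_large_class C a t (take t col)})"
      unfolding AE_measure_pmf_iff
    proof (intro ballI impI)
      fix col assume col: "col \<in> set_pmf (colour_process a n)"
        and "col \<in> {col. \<not> small_classes C a n col}"
      moreover have "length col = n"
        using colour_process_support(1)[OF col] assms(1,2) by simp
      ultimately obtain t where "t0 \<le> t" "t \<le> n" "has_large_class C a t (take t col)"
        using not_small_classes_imp_has_large_class[of C a n col] assms(3,4) by auto
      then show "col \<in> (\<Union>t\<in>{t0..n}. {col. has_large_class C a t (take t col)})"
        by auto
    qed
  qed simp
  also have "\<dots> \<le> (\<Sum>t\<in>{t0..n}. ?P {col. has_large_class C a t (take t col)})"
    by (rule measure_pmf.finite_measure_subadditive_finite) auto
  also have "\<dots> = (\<Sum>t\<in>{t0..n}. measure_pmf.prob (colour_process a t) {col. has_large_class C a t col})"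
    using assms(1) by (intro sum.cong refl prob_colour_process_take) auto
  finally show ?thesis .
qed

lemma ln_bounds_of_exp_le:
  assumes "a > 0" "exp (max 2 (2 powr (1 / a))) \<le> real t"
  shows "2 \<le> ln (real t)" "2 \<le> ln (real t) powr a"
proof -
  have K: "max 2 (2 powr (1 / a)) \<le> ln (real t)"
    using assms(2) by (metis exp_gt_zero exp_le_cancel_iff less_le_trans ln_exp ln_le_cancel_iff)
  then show "2 \<le> ln (real t)" by simp
  have "2 = (2 powr (1 / a)) powr a" using assms(1) by (simp add: powr_powr)
  also have "\<dots> \<le> ln (real t) powr a" using K assms(1) by (intro powr_mono2) auto
  finally show "2 \<le> ln (real t) powr a" .
qed

lemma prob_small_classes_ge:
  assumes "a > 0" "ln (real n) powr (a + 1) \<le> real n"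
    and "exp (max 2 (2 powr (1 / a))) + 2 \<le> ln (real n) powr (a + 1)"
  shows "1 - 2 / (ln (real n) powr (a + 1) - 1)
       \<le> measure_pmf.prob (colour_process a n) {col. small_classes 40 a n col}"
proof -
  define l where "l = ln (real n) powr (a + 1)"
  define t0 where "t0 = nat \<lceil>l\<rceil>"
  let ?P = "measure_pmf.prob (colour_process a n)"
  have "l \<ge> 3" using assms(3) exp_ge_add_one_self[of "max 2 (2 powr (1 / a))"] unfolding l_def by linarith
  then have t0: "l \<le> real t0" "2 \<le> t0" "t0 \<le> n"
    using assms(2) unfolding t0_def l_def by linarith+
  have ge_t0: "t0 \<le> t" if "l \<le> real t" for t
    using that unfolding t0_def by linarith
  have "?P {col. \<not> small_classes 40 a n col}
      \<le> (\<Sum>t\<in>{t0..n}. measure_pmf.prob (colour_process a t) {col. has_large_class 40 a t col})"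
    using t0(2,3) assms(2) ge_t0 unfolding l_def by (rule prob_not_small_classes_le)
  also have "\<dots> \<le> (\<Sum>t\<in>{t0..n}. 2 * (1 / (real t * (real t - 1))))"
  proof (intro sum_mono)
    fix t assume "t \<in> {t0..n}"
    then have "exp (max 2 (2 powr (1 / a))) \<le> real t" using t0(1) assms(3) unfolding l_def by auto
    then show "measure_pmf.prob (colour_process a t) {col. has_large_class 40 a t col}
        \<le> 2 * (1 / (real t * (real t - 1)))"
      using prob_has_large_class_le[OF assms(1) ln_bounds_of_exp_le[OF assms(1)]] by simp
  qed
  also have "\<dots> = 2 * (\<Sum>t\<in>{t0..n}. 1 / (real t * (real t - 1)))"
    by (rule sum_distrib_left[symmetric])
  also have "\<dots> \<le> 2 * (1 / (real t0 - 1))"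
    using sum_inverse_pronic_le[OF t0(2), of n] by simp
  also have "\<dots> \<le> 2 / (l - 1)"
    using t0(1) \<open>l \<ge> 3\<close> by (simp add: frac_le)
  finally have "?P {col. \<not> small_classes 40 a n col} \<le> 2 / (l - 1)" .
  moreover have "?P {col. \<not> small_classes 40 a n col} = 1 - ?P {col. small_classes 40 a n col}"
    using measure_pmf.prob_compl[of "{col. small_classes 40 a n col}" "colour_process a n"]
    by (simp add: Compl_eq_Diff_UNIV[symmetric] Compl_eq)
  ultimately show ?thesis unfolding l_def by linarith
qed

lemma prob_small_classes_tendsto:
  assumes "a > 1"
  shows "(\<lambda>n. measure_pmf.prob (colour_process a n) {col. small_classes 40 a n col}) \<longlonglongrightarrow> 1"
proof (rule tendsto_sandwich[OF _ _ _ tendsto_const])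
  show "(\<lambda>n. 1 - 2 / (ln (real n) powr (a + 1) - 1)) \<longlonglongrightarrow> 1"
    using assms by real_asymp
  have "filterlim (\<lambda>n::nat. ln (real n) powr (a + 1)) at_top sequentially"
    using assms by real_asymp
  then have "eventually (\<lambda>n. exp (max 2 (2 powr (1 / a))) + 2 \<le> ln (real n) powr (a + 1)) sequentially"
    by (simp add: filterlim_at_top)
  moreover have "eventually (\<lambda>n::nat. ln (real n) powr (a + 1) \<le> real n) sequentially"
    using assms by real_asymp
  ultimately show "eventually (\<lambda>n. 1 - 2 / (ln (real n) powr (a + 1) - 1)
      \<le> measure_pmf.prob (colour_process a n) {col. small_classes 40 a n col}) sequentially"
    by eventually_elim (use assms prob_small_classes_ge in auto)
qed simp

theorem lemma3:
  fixes a :: real and d :: nat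
  assumes "a > 1" and "d \<ge> 4"
  shows "\<exists>C>0. (\<lambda>n. measure_pmf.prob (sm_graph a d n)
     {s. (\<forall>c \<in> set (fst s). real (comm_size_at (fst s) n c) \<le> C * ln (real n) powr (a + 1))
       \<and> (\<forall>t. ln (real n) powr (a + 1) \<le> real t \<and> t \<le> n \<longrightarrow>
            (\<forall>c \<in> set (take t (fst s)). real (comm_size_at (fst s) t c) \<le> C * ln (real t) powr (a + 1)))})
     \<longlonglongrightarrow> 1"
proof -
  have "measure_pmf.prob (colour_process a n) {col. small_classes 40 a n col}
      = measure_pmf.prob (sm_graph a d n) (fst -` {col. small_classes 40 a n col})" for n
    by (simp only: map_pmf_fst_sm_graph[of a d n, symmetric] measure_map_pmf)
  then have "(\<lambda>n. measure_pmf.prob (sm_graph a d n) (fst -` {col. small_classes 40 a n col})) \<longlonglongrightarrow> 1"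
    using prob_small_classes_tendsto[OF assms(1)] by simp
  then show ?thesis
    unfolding small_classes_def vimage_def by (intro exI[of _ 40]) auto
qed

end
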